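(* Let $X_1,\ldots,X_n$ be independent and uniformly distributed on $\{1,\ldots,n\}$ under $\mathbb{P}$, let $Y_q:=\#\{1\le i\le n:q\mid X_i\}$ for primes $q$, and $S(k,n):=\{q\in\mathcal{P}:k<q\le n\}$. Then for every $\epsilon>0$, \[ \limsup_{k\to\infty}\limsup_{n\to\infty}\frac{1}{n}\log\mathbb{P}\left(\sum_{q\in S(k,n)}Y_{q}^{2}>n^{2}\epsilon\right)=-\infty. \]
   Context: $\mathcal{P}$ denotes the set of primes. *)

theory Defs
  imports "HOL-Probability.Probability"
begin

definition eln :: "real \<Rightarrow> ereal" where
  "eln p = (if p \<le> 0 then - \<infinity> else ereal (ln p))"

text \<open>Joint law of X_1,...,X_n: independent, uniform on {1..n}
  (uniform distribution on the product space {1..n}^{1..n}).\<close>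
definition sample_space :: "nat \<Rightarrow> (nat \<Rightarrow> nat) pmf" where
  "sample_space n = pmf_of_set (PiE {1..n} (\<lambda>_. {1..n}))"

definition Ycount :: "nat \<Rightarrow> nat \<Rightarrow> (nat \<Rightarrow> nat) \<Rightarrow> nat" where
  "Ycount n q X = card {i \<in> {1..n}. q dvd X i}"

definition Sprimes :: "nat \<Rightarrow> nat \<Rightarrow> nat set" where
  "Sprimes k n = {q. prime q \<and> k < q \<and> q \<le> n}"

end

theory Submission imports Defs begin

text \<open>
  Fix \<open>\<theta> \<ge> 0\<close> and the thresholds \<open>m q = e^(1+\<theta>) n / q\<close>. Since the sum of \<open>1/q^2\<close> over
  \<open>q > k\<close> is at most \<open>1/k\<close>, the squares of the thresholds add up to at most \<open>\<epsilon> n^2 / 2\<close>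
  once \<open>k\<close> is large. So on the event \<open>\<Sum>q. Y q^2 > \<epsilon> n^2\<close> the primes with \<open>Y q > m q\<close>
  impose more than \<open>\<epsilon> n / 2\<close> constraints \<open>q dvd X i\<close> in total, and a prescribed pattern
  \<open>C\<close> of constraints holds with probability at most \<open>\<Prod>q. q^-|C q|\<close>. Summing over the
  patterns with the weight \<open>e^(\<theta> (\<Sum>q. |C q| - \<epsilon> n / 2)) \<ge> 1\<close> factorises the union bound
  into \<open>e^(-\<theta> \<epsilon> n / 2) \<Prod>q. \<Sum>T. (e^\<theta> / q)^|T|\<close>, where \<open>T\<close> is empty or larger than \<open>m q\<close>;
  each factor is at most 2 because \<open>(1 + e^(1+\<theta>) / q)^n \<le> e^(m q)\<close>. The probability is thus
  at most \<open>2^n e^(-\<theta> \<epsilon> n / 2)\<close> with \<open>\<theta>\<close> arbitrary.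
\<close>

definition subsets_empty_or_card_gt :: "'a set \<Rightarrow> real \<Rightarrow> 'a set set" where
  "subsets_empty_or_card_gt I m = {T \<in> Pow I. T = {} \<or> real (card T) > m}"

lemma prod_primes_dvd:
  fixes x :: nat
  assumes "finite Q" and "\<And>q. q \<in> Q \<Longrightarrow> prime q" and "\<And>q. q \<in> Q \<Longrightarrow> q dvd x"
  shows "(\<Prod>q\<in>Q. q) dvd x"
  using assms
proof (induction Q rule: finite_induct)
  case empty
  then show ?case by simp
next
  case (insert q F)
  have "coprime q (\<Prod>p\<in>F. p)"
    using insert by (intro prod_coprime_right primes_coprime) auto
  with insert show ?case by (simp add: divides_mult)
qed

lemma card_multiples_le:
  assumes "L > (0::nat)"
  shows "real (card {x\<in>{1..n}. L dvd x}) \<le> real n / real L"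
proof -
  have "{x\<in>{1..n}. L dvd x} \<subseteq> (\<lambda>j. L * j) ` {1..n div L}"
  proof
    fix x assume "x \<in> {x\<in>{1..n}. L dvd x}"
    then obtain j where j: "x = L * j" "1 \<le> x" "x \<le> n" by auto
    then have "1 \<le> j" by (cases j) auto
    moreover have "j \<le> n div L"
      using j assms by (metis div_le_mono nonzero_mult_div_cancel_left not_gr0)
    ultimately show "x \<in> (\<lambda>j. L * j) ` {1..n div L}" using j by auto
  qed
  then have "card {x\<in>{1..n}. L dvd x} \<le> card ((\<lambda>j. L * j) ` {1..n div L})"
    by (intro card_mono) auto
  also have "\<dots> \<le> n div L"
    using card_image_le[of "{1..n div L}" "\<lambda>j. L * j"] by simp
  finally have "real (card {x\<in>{1..n}. L dvd x}) \<le> real (n div L)"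
    by simp
  also have "\<dots> \<le> real n / real L"
    by (rule of_nat_div_le_of_nat)
  finally show ?thesis .
qed

lemma card_divisibility_pattern_le:
  assumes S: "finite S" "\<And>q. q \<in> S \<Longrightarrow> prime q"
    and C: "\<And>q. q \<in> S \<Longrightarrow> C q \<subseteq> {1..n}"
  shows "real (card {X\<in>PiE {1..n} (\<lambda>_. {1..n}). \<forall>q\<in>S. \<forall>i\<in>C q. q dvd X i})
           \<le> real n ^ n * (\<Prod>q\<in>S. (1 / real q) ^ card (C q))"
proof -
  define I where "I = {1..n}"
  define L where "L i = (\<Prod>q\<in>{q\<in>S. i \<in> C q}. q)" for i
  define A where "A i = {x\<in>I. \<forall>q\<in>S. i \<in> C q \<longrightarrow> q dvd x}" for i
  have L_pos: "L i > 0" for i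
    unfolding L_def using S by (simp add: prime_gt_0_nat prod_pos)
  have "{X\<in>PiE I (\<lambda>_. I). \<forall>q\<in>S. \<forall>i\<in>C q. q dvd X i} = PiE I A"
    by (intro set_eqI) (use C in \<open>auto simp: A_def I_def PiE_iff\<close>)
  then have "real (card {X\<in>PiE I (\<lambda>_. I). \<forall>q\<in>S. \<forall>i\<in>C q. q dvd X i})
      = (\<Prod>i\<in>I. real (card (A i)))"
    by (simp add: card_PiE I_def)
  also have "\<dots> \<le> (\<Prod>i\<in>I. real n / real (L i))"
  proof (intro prod_mono conjI)
    fix i
    have "A i \<subseteq> {x\<in>I. L i dvd x}"
      unfolding A_def L_def using S by (auto intro!: prod_primes_dvd)
    then have "card (A i) \<le> card {x\<in>I. L i dvd x}"
      by (intro card_mono) (auto simp: I_def)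
    then show "real (card (A i)) \<le> real n / real (L i)"
      using card_multiples_le[OF L_pos[of i], of n] unfolding I_def by linarith
  qed simp
  also have "\<dots> = real n ^ n * (\<Prod>i\<in>I. \<Prod>q\<in>{q\<in>S. i \<in> C q}. 1 / real q)"
    by (simp add: I_def L_def prod_dividef)
  also have "(\<Prod>i\<in>I. \<Prod>q\<in>{q\<in>S. i \<in> C q}. 1 / real q) = (\<Prod>q\<in>S. \<Prod>i\<in>{i\<in>I. i \<in> C q}. 1 / real q)"
    using prod.swap_restrict[of I S "\<lambda>_ q. 1 / real q" "\<lambda>i q. i \<in> C q"] S by (simp add: I_def)
  also have "\<dots> = (\<Prod>q\<in>S. (1 / real q) ^ card (C q))"
  proof (intro prod.cong refl)
    fix q assume "q \<in> S"
    with C have "{i\<in>I. i \<in> C q} = C q" unfolding I_def by blast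
    then show "(\<Prod>i\<in>{i\<in>I. i \<in> C q}. 1 / real q) = (1 / real q) ^ card (C q)" by simp
  qed
  finally show ?thesis by (simp add: I_def)
qed

lemma sum_inverse_squares_greaterThanAtMost_le:
  assumes "0 < k" and "k \<le> n"
  shows "(\<Sum>q\<in>{k<..n}. 1 / real q ^ 2) \<le> 1 / real k - 1 / real n"
  using assms(2)
proof (induction n rule: dec_induct)
  case base
  then show ?case by simp
next
  case (step m)
  have m_pos: "real m > 0" using step assms by simp
  have "1 / real (Suc m) ^ 2 \<le> 1 / (real m * real (Suc m))"
    using m_pos by (intro frac_le) (auto simp: power2_eq_square)
  also have "\<dots> = 1 / real m - 1 / real (Suc m)"
    using m_pos by (simp add: field_simps)
  finally have "1 / real (Suc m) ^ 2 \<le> 1 / real m - 1 / real (Suc m)" .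
  moreover have "{k<..Suc m} = insert (Suc m) {k<..m}" using step by auto
  ultimately show ?case using step.IH by simp
qed

lemma sum_inverse_squares_Sprimes_le:
  assumes "0 < k"
  shows "(\<Sum>q\<in>Sprimes k n. 1 / real q ^ 2) \<le> 1 / real k"
proof -
  have "(\<Sum>q\<in>Sprimes k n. 1 / real q ^ 2) \<le> (\<Sum>q\<in>{k<..n}. 1 / real q ^ 2)"
    by (rule sum_mono2) (auto simp: Sprimes_def)
  also have "\<dots> \<le> 1 / real k"
  proof (cases "k \<le> n")
    case True
    have "0 \<le> 1 / real n" by simp
    with sum_inverse_squares_greaterThanAtMost_le[OF assms True] show ?thesis by linarith
  qed simp
  finally show ?thesis .
qed

lemma sum_squares_scaled_inverse_Sprimes_le:
  assumes "0 < k"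
  shows "(\<Sum>q\<in>Sprimes k n. (c * real n / real q) ^ 2) \<le> c ^ 2 * real n ^ 2 / real k"
proof -
  have "(\<Sum>q\<in>Sprimes k n. (c * real n / real q) ^ 2)
      = c ^ 2 * real n ^ 2 * (\<Sum>q\<in>Sprimes k n. 1 / real q ^ 2)"
    by (simp add: sum_distrib_left power_mult_distrib power_divide)
  also have "\<dots> \<le> c ^ 2 * real n ^ 2 * (1 / real k)"
    using sum_inverse_squares_Sprimes_le[OF assms] by (intro mult_left_mono) auto
  finally show ?thesis by simp
qed

lemma sum_pow_card_subsets_empty_or_card_gt_le_2:
  fixes a :: real
  assumes "0 \<le> a" and "finite I"
  shows "(\<Sum>T\<in>subsets_empty_or_card_gt I (exp 1 * a * real (card I)). a ^ card T) \<le> 2"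
proof -
  define m where "m = exp 1 * a * real (card I)"
  \<comment> \<open>Rankin's trick: a term with \<open>card T > m\<close> is at most \<open>a^|T| e^(|T| - m)\<close>.\<close>
  define g where "g T = (if T = {} then 1 else 0) + (exp 1 * a) ^ card T * exp (- m)" for T :: "'a set"
  have "(\<Sum>T\<in>subsets_empty_or_card_gt I m. a ^ card T) \<le> (\<Sum>T\<in>subsets_empty_or_card_gt I m. g T)"
  proof (intro sum_mono)
    fix T assume T: "T \<in> subsets_empty_or_card_gt I m"
    show "a ^ card T \<le> g T"
    proof (cases "T = {}")
      case False
      with T have "1 \<le> exp (real (card T) - m)"
        by (simp add: subsets_empty_or_card_gt_def)
      then have "a ^ card T \<le> a ^ card T * exp (real (card T) - m)"
        using assms(1) by (simp add: mult_le_cancel_left1)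
      also have "\<dots> = (exp 1 * a) ^ card T * exp (- m)"
        by (simp add: exp_diff exp_minus power_mult_distrib exp_of_nat_mult[symmetric] field_simps)
      finally show ?thesis using False by (simp add: g_def)
    qed (simp add: g_def)
  qed
  also have "\<dots> \<le> (\<Sum>T\<in>Pow I. g T)"
    using assms by (intro sum_mono2) (auto simp: subsets_empty_or_card_gt_def g_def)
  also have "\<dots> = 1 + exp (- m) * (\<Sum>T\<in>Pow I. (exp 1 * a) ^ card T)"
    using assms(2) by (simp add: g_def sum.distrib sum_distrib_left sum.delta' mult.commute)
  also have "(\<Sum>T\<in>Pow I. (exp 1 * a) ^ card T) = (1 + exp 1 * a) ^ card I"
    using prod_add[OF assms(2), of "\<lambda>_. exp 1 * a" "\<lambda>_. 1"] by (simp add: add.commute)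
  also have "\<dots> \<le> exp (exp 1 * a) ^ card I"
    by (intro power_mono) (use assms(1) in \<open>auto simp: add.commute\<close>)
  also have "\<dots> = exp m"
    by (simp add: m_def exp_of_nat_mult[symmetric] mult.commute)
  finally show ?thesis by (simp add: m_def exp_minus field_simps)
qed

lemma prod_sum_pow_card_subsets_empty_or_card_gt_le:
  fixes a :: "'b \<Rightarrow> real"
  assumes "finite I" and "\<And>q. q \<in> S \<Longrightarrow> 0 \<le> a q"
  shows "(\<Prod>q\<in>S. \<Sum>T\<in>subsets_empty_or_card_gt I (exp 1 * a q * real (card I)). a q ^ card T)
           \<le> 2 ^ card S"
proof -
  have "(\<Prod>q\<in>S. \<Sum>T\<in>subsets_empty_or_card_gt I (exp 1 * a q * real (card I)). a q ^ card T)
      \<le> (\<Prod>q\<in>S. 2)"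
    using assms sum_pow_card_subsets_empty_or_card_gt_le_2
    by (intro prod_mono) (auto intro: sum_nonneg)
  then show ?thesis by simp
qed

lemma sum_prod_pow_card_sum_gt_le:
  fixes w :: "'a \<Rightarrow> real" and V :: "'a \<Rightarrow> 'b set set"
  assumes "finite S" and "\<And>q. q \<in> S \<Longrightarrow> finite (V q)"
    and "\<And>q. q \<in> S \<Longrightarrow> 0 \<le> w q" and "0 \<le> \<theta>"
  shows "(\<Sum>C\<in>{C\<in>PiE S V. (\<Sum>q\<in>S. real (card (C q))) > t}. \<Prod>q\<in>S. w q ^ card (C q))
           \<le> exp (- \<theta> * t) * (\<Prod>q\<in>S. \<Sum>T\<in>V q. (exp \<theta> * w q) ^ card T)"
proof -
  have tilt: "(\<Prod>q\<in>S. w q ^ card (C q)) \<le> exp (- \<theta> * t) * (\<Prod>q\<in>S. (exp \<theta> * w q) ^ card (C q))"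
    if "(\<Sum>q\<in>S. real (card (C q))) > t" for C :: "'a \<Rightarrow> 'b set"
  proof -
    have "1 \<le> exp (\<theta> * ((\<Sum>q\<in>S. real (card (C q))) - t))"
      using that assms(4) by simp
    then have "(\<Prod>q\<in>S. w q ^ card (C q))
        \<le> exp (\<theta> * ((\<Sum>q\<in>S. real (card (C q))) - t)) * (\<Prod>q\<in>S. w q ^ card (C q))"
      using assms(3) prod_nonneg[of S "\<lambda>q. w q ^ card (C q)"] by (simp add: mult_le_cancel_right1)
    also have "\<dots> = exp (- \<theta> * t) * (\<Prod>q\<in>S. (exp \<theta> * w q) ^ card (C q))"
      using assms(1)
      by (simp add: power_mult_distrib prod.distrib exp_sum exp_of_nat_mult[symmetric]
          exp_diff exp_minus right_diff_distrib sum_distrib_left mult.commute field_simps)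
    finally show ?thesis .
  qed
  have "(\<Sum>C\<in>{C\<in>PiE S V. (\<Sum>q\<in>S. real (card (C q))) > t}. \<Prod>q\<in>S. w q ^ card (C q))
      \<le> (\<Sum>C\<in>{C\<in>PiE S V. (\<Sum>q\<in>S. real (card (C q))) > t}. exp (- \<theta> * t) * (\<Prod>q\<in>S. (exp \<theta> * w q) ^ card (C q)))"
    by (intro sum_mono tilt) simp
  also have "\<dots> \<le> (\<Sum>C\<in>PiE S V. exp (- \<theta> * t) * (\<Prod>q\<in>S. (exp \<theta> * w q) ^ card (C q)))"
    using assms by (intro sum_mono2 finite_PiE) (auto intro!: mult_nonneg_nonneg prod_nonneg)
  also have "\<dots> = exp (- \<theta> * t) * (\<Prod>q\<in>S. \<Sum>T\<in>V q. (exp \<theta> * w q) ^ card T)"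
    using assms by (simp add: prod_sum_PiE sum_distrib_left)
  finally show ?thesis .
qed

lemma Sprimes_subset: "Sprimes k n \<subseteq> {1..n}"
  by (auto simp: Sprimes_def prime_ge_1_nat)

lemma Ycount_le: "Ycount n q X \<le> n"
proof -
  have "card {i\<in>{1..n}. q dvd X i} \<le> card {1..n}" by (rule card_mono) auto
  then show ?thesis by (simp add: Ycount_def)
qed

lemma sum_squares_Ycount_gt_imp_divisibility_pattern:
  fixes m :: "nat \<Rightarrow> real"
  assumes "finite S" and m_nonneg: "\<And>q. q \<in> S \<Longrightarrow> 0 \<le> m q"
    and m_small: "(\<Sum>q\<in>S. m q ^ 2) \<le> \<epsilon> / 2 * real n ^ 2"
    and X_large: "(\<Sum>q\<in>S. real (Ycount n q X) ^ 2) > real n ^ 2 * \<epsilon>"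
  obtains C where "C \<in> PiE S (\<lambda>q. subsets_empty_or_card_gt {1..n} (m q))"
    and "\<epsilon> / 2 * real n < (\<Sum>q\<in>S. real (card (C q)))"
    and "\<And>q i. q \<in> S \<Longrightarrow> i \<in> C q \<Longrightarrow> q dvd X i"
proof -
  define C where
    "C = restrict (\<lambda>q. if real (Ycount n q X) > m q then {i\<in>{1..n}. q dvd X i} else {}) S"
  have card_C: "card (C q) = (if real (Ycount n q X) > m q then Ycount n q X else 0)"
    if "q \<in> S" for q
    using that by (simp add: C_def Ycount_def)
  have "C q \<in> subsets_empty_or_card_gt {1..n} (m q)" if "q \<in> S" for q
    using card_C[OF that] that by (auto simp: C_def subsets_empty_or_card_gt_def)
  then have "C \<in> PiE S (\<lambda>q. subsets_empty_or_card_gt {1..n} (m q))"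
    by (auto simp: C_def)
  moreover have "\<epsilon> / 2 * real n < (\<Sum>q\<in>S. real (card (C q)))"
  proof -
    have Ycount_sq_le: "real (Ycount n q X) ^ 2 \<le> m q ^ 2 + real n * real (card (C q))"
      if "q \<in> S" for q
    proof (cases "real (Ycount n q X) > m q")
      case True
      have "real (Ycount n q X) ^ 2 \<le> real n * real (Ycount n q X)"
        using Ycount_le[of n q X] by (simp add: power2_eq_square mult_right_mono)
      then show ?thesis
        using True card_C[OF that] by (simp add: add_increasing)
    next
      case False
      then have "real (Ycount n q X) ^ 2 \<le> m q ^ 2"
        using m_nonneg[OF that] by (intro power_mono) auto
      then show ?thesis by (simp add: add_increasing2)
    qed
    have "(\<Sum>q\<in>S. real (Ycount n q X) ^ 2) \<le> (\<Sum>q\<in>S. m q ^ 2 + real n * real (card (C q)))"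
      by (rule sum_mono) (rule Ycount_sq_le)
    with X_large have "real n ^ 2 * \<epsilon> < (\<Sum>q\<in>S. m q ^ 2 + real n * real (card (C q)))"
      by linarith
    also have "\<dots> = (\<Sum>q\<in>S. m q ^ 2) + real n * (\<Sum>q\<in>S. real (card (C q)))"
      by (simp add: sum.distrib sum_distrib_left)
    finally have "real n * (\<epsilon> / 2 * real n) < real n * (\<Sum>q\<in>S. real (card (C q)))"
      using m_small by (simp add: power2_eq_square algebra_simps)
    then show ?thesis by (rule mult_left_less_imp_less) simp
  qed
  moreover have "\<And>q i. q \<in> S \<Longrightarrow> i \<in> C q \<Longrightarrow> q dvd X i"
    by (auto simp: C_def split: if_splits)
  ultimately show ?thesis by (rule that)
qed

lemma card_sum_squares_Ycount_gt_le_sum_patterns: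
  fixes m :: "nat \<Rightarrow> real"
  assumes S: "finite S" "\<And>q. q \<in> S \<Longrightarrow> prime q"
    and m_nonneg: "\<And>q. q \<in> S \<Longrightarrow> 0 \<le> m q"
    and m_small: "(\<Sum>q\<in>S. m q ^ 2) \<le> \<epsilon> / 2 * real n ^ 2"
  shows "real (card {X\<in>PiE {1..n} (\<lambda>_. {1..n}). (\<Sum>q\<in>S. real (Ycount n q X) ^ 2) > real n ^ 2 * \<epsilon>})
           \<le> real n ^ n * (\<Sum>C\<in>{C\<in>PiE S (\<lambda>q. subsets_empty_or_card_gt {1..n} (m q)).
                                   (\<Sum>q\<in>S. real (card (C q))) > \<epsilon> / 2 * real n}.
                             \<Prod>q\<in>S. (1 / real q) ^ card (C q))"
proof -
  define \<Omega> where "\<Omega> = PiE {1..n} (\<lambda>_::nat. {1..n::nat})"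
  define V where "V = (\<lambda>q. subsets_empty_or_card_gt {1..n} (m q))"
  define CC where "CC = {C\<in>PiE S V. (\<Sum>q\<in>S. real (card (C q))) > \<epsilon> / 2 * real n}"
  define G where "G C = {X\<in>\<Omega>. \<forall>q\<in>S. \<forall>i\<in>C q. q dvd X i}" for C :: "nat \<Rightarrow> nat set"
  define Bad where "Bad = {X\<in>\<Omega>. (\<Sum>q\<in>S. real (Ycount n q X) ^ 2) > real n ^ 2 * \<epsilon>}"
  have "Bad \<subseteq> (\<Union>C\<in>CC. G C)"
  proof
    fix X assume "X \<in> Bad"
    then obtain C where "C \<in> PiE S V" "\<epsilon> / 2 * real n < (\<Sum>q\<in>S. real (card (C q)))"
      "\<And>q i. q \<in> S \<Longrightarrow> i \<in> C q \<Longrightarrow> q dvd X i"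
      using sum_squares_Ycount_gt_imp_divisibility_pattern[OF S(1) m_nonneg m_small]
      unfolding Bad_def V_def by auto
    with \<open>X \<in> Bad\<close> show "X \<in> (\<Union>C\<in>CC. G C)"
      unfolding Bad_def CC_def G_def by blast
  qed
  moreover have "finite (PiE S V)"
    using S(1) by (intro finite_PiE) (auto simp: V_def subsets_empty_or_card_gt_def)
  then have "finite CC"
    unfolding CC_def by (rule finite_subset[rotated]) auto
  moreover have "finite \<Omega>"
    unfolding \<Omega>_def by (intro finite_PiE) auto
  then have "finite (G C)" for C
    unfolding G_def by (rule finite_subset[rotated]) auto
  ultimately have "real (card Bad) \<le> (\<Sum>C\<in>CC. real (card (G C)))"
    unfolding of_nat_sum[symmetric] by (intro of_nat_mono order_trans[OF card_mono card_UN_le]) auto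
  also have "\<dots> \<le> (\<Sum>C\<in>CC. real n ^ n * (\<Prod>q\<in>S. (1 / real q) ^ card (C q)))"
  proof (intro sum_mono)
    fix C assume "C \<in> CC"
    then have "C q \<subseteq> {1..n}" if "q \<in> S" for q
      using PiE_mem[of C S V q] that by (auto simp: CC_def V_def subsets_empty_or_card_gt_def)
    then show "real (card (G C)) \<le> real n ^ n * (\<Prod>q\<in>S. (1 / real q) ^ card (C q))"
      unfolding G_def \<Omega>_def using card_divisibility_pattern_le[OF S] by blast
  qed
  finally show ?thesis
    by (simp add: Bad_def \<Omega>_def CC_def V_def sum_distrib_left)
qed

lemma card_sum_squares_Ycount_gt_le:
  fixes \<epsilon> \<theta> :: real
  assumes "0 < \<epsilon>" and "0 \<le> \<theta>" and k_large: "2 * exp (1 + \<theta>) ^ 2 / \<epsilon> \<le> real k"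
  shows "real (card {X\<in>PiE {1..n} (\<lambda>_. {1..n}).
                       (\<Sum>q\<in>Sprimes k n. real (Ycount n q X) ^ 2) > real n ^ 2 * \<epsilon>})
           \<le> real n ^ n * (exp (- \<theta> * (\<epsilon> / 2 * real n)) * 2 ^ n)"
proof -
  define S where "S = Sprimes k n"
  define w where "w q = 1 / real q" for q :: nat
  define V where "V = (\<lambda>q. subsets_empty_or_card_gt {1..n} (exp (1 + \<theta>) * real n / real q))"
  have "0 < 2 * exp (1 + \<theta>) ^ 2 / \<epsilon>"
    using \<open>0 < \<epsilon>\<close> by simp
  with k_large have "0 < k"
    by simp
  have S: "finite S" "\<And>q. q \<in> S \<Longrightarrow> prime q" "S \<subseteq> {1..n}"
    using Sprimes_subset[of k n] by (auto simp: S_def Sprimes_def intro: finite_subset)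
  have thresholds: "exp 1 * (exp \<theta> * w q) * real (card {1..n}) = exp (1 + \<theta>) * real n / real q" for q
    by (simp add: w_def exp_add)
  have "(\<Sum>q\<in>S. (exp (1 + \<theta>) * real n / real q) ^ 2) \<le> exp (1 + \<theta>) ^ 2 * real n ^ 2 / real k"
    unfolding S_def by (rule sum_squares_scaled_inverse_Sprimes_le[OF \<open>0 < k\<close>])
  also have "\<dots> = real n ^ 2 * (exp (1 + \<theta>) ^ 2 / real k)"
    by simp
  also have "\<dots> \<le> real n ^ 2 * (\<epsilon> / 2)"
    using k_large \<open>0 < \<epsilon>\<close> \<open>0 < k\<close> by (intro mult_left_mono) (simp_all add: field_simps)
  finally have "real (card {X\<in>PiE {1..n} (\<lambda>_. {1..n}). (\<Sum>q\<in>S. real (Ycount n q X) ^ 2) > real n ^ 2 * \<epsilon>})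
      \<le> real n ^ n * (\<Sum>C\<in>{C\<in>PiE S V. (\<Sum>q\<in>S. real (card (C q))) > \<epsilon> / 2 * real n}.
                         \<Prod>q\<in>S. w q ^ card (C q))"
    using card_sum_squares_Ycount_gt_le_sum_patterns[OF S(1,2), of "\<lambda>q. exp (1 + \<theta>) * real n / real q" \<epsilon> n]
    by (simp add: V_def w_def mult.commute)
  also have "\<dots> \<le> real n ^ n * (exp (- \<theta> * (\<epsilon> / 2 * real n)) * (\<Prod>q\<in>S. \<Sum>T\<in>V q. (exp \<theta> * w q) ^ card T))"
    using S(1) \<open>0 \<le> \<theta>\<close> by (intro mult_left_mono sum_prod_pow_card_sum_gt_le) (auto simp: V_def w_def subsets_empty_or_card_gt_def)
  also have "\<dots> \<le> real n ^ n * (exp (- \<theta> * (\<epsilon> / 2 * real n)) * 2 ^ n)"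
  proof -
    have "(\<Prod>q\<in>S. \<Sum>T\<in>V q. (exp \<theta> * w q) ^ card T) \<le> 2 ^ card S"
      unfolding V_def thresholds[symmetric]
      by (rule prod_sum_pow_card_subsets_empty_or_card_gt_le) (auto simp: w_def)
    also have "\<dots> \<le> 2 ^ n"
      using card_mono[OF _ S(3)] by (simp add: power_increasing)
    finally show ?thesis by (intro mult_left_mono) auto
  qed
  finally show ?thesis by (simp add: S_def)
qed

lemma prob_sum_squares_Ycount_gt_le_exp:
  fixes \<epsilon> M :: real
  assumes "0 < \<epsilon>" and "0 \<le> M"
  obtains K where "\<And>k n. K \<le> k \<Longrightarrow> 0 < n \<Longrightarrow>
    measure_pmf.prob (sample_space n)
      {X. (\<Sum>q\<in>Sprimes k n. real (Ycount n q X) ^ 2) > real n ^ 2 * \<epsilon>} \<le> exp (- M * real n)"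
proof -
  define \<theta> where "\<theta> = (M + ln 2) * 2 / \<epsilon>"
  define K where "K = nat \<lceil>2 * exp (1 + \<theta>) ^ 2 / \<epsilon>\<rceil> + 1"
  have "measure_pmf.prob (sample_space n)
      {X. (\<Sum>q\<in>Sprimes k n. real (Ycount n q X) ^ 2) > real n ^ 2 * \<epsilon>} \<le> exp (- M * real n)"
    if "K \<le> k" and "0 < n" for k n
  proof -
    define \<Omega> where "\<Omega> = PiE {1..n} (\<lambda>_::nat. {1..n::nat})"
    define Bad where "Bad = {X. (\<Sum>q\<in>Sprimes k n. real (Ycount n q X) ^ 2) > real n ^ 2 * \<epsilon>}"
    have \<Omega>_finite: "finite \<Omega>" and card_\<Omega>: "card \<Omega> = n ^ n"
      by (auto simp: \<Omega>_def card_PiE intro: finite_PiE)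
    then have "\<Omega> \<noteq> {}" using \<open>0 < n\<close> by auto
    then have "measure_pmf.prob (sample_space n) Bad = real (card (\<Omega> \<inter> Bad)) / real n ^ n"
      using \<Omega>_finite card_\<Omega> unfolding sample_space_def \<Omega>_def[symmetric]
      by (simp add: measure_pmf_of_set)
    also have "\<dots> \<le> exp (- \<theta> * (\<epsilon> / 2 * real n)) * 2 ^ n"
    proof -
      have "0 \<le> \<theta>" using assms by (simp add: \<theta>_def)
      moreover have "2 * exp (1 + \<theta>) ^ 2 / \<epsilon> \<le> real k"
        using that(1) real_nat_ceiling_ge[of "2 * exp (1 + \<theta>) ^ 2 / \<epsilon>"] by (simp add: K_def)
      ultimately have "real (card (\<Omega> \<inter> Bad)) \<le> real n ^ n * (exp (- \<theta> * (\<epsilon> / 2 * real n)) * 2 ^ n)"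
        using card_sum_squares_Ycount_gt_le[OF \<open>0 < \<epsilon>\<close>, of \<theta> k n] that(1) \<Omega>_def Bad_def
        by (auto simp: Int_def conj_commute)
      then show ?thesis using \<open>0 < n\<close> by (simp add: field_simps)
    qed
    also have "\<dots> = exp (- M * real n)"
    proof -
      have "- \<theta> * (\<epsilon> / 2 * real n) = - M * real n - real n * ln 2"
        using \<open>0 < \<epsilon>\<close> by (simp add: \<theta>_def field_simps)
      then show ?thesis by (simp add: exp_diff exp_of_nat_mult)
    qed
    finally show ?thesis unfolding Bad_def .
  qed
  then show ?thesis by (rule that)
qed

lemma limsup_scaled_eln_le:
  fixes p :: "nat \<Rightarrow> real"
  assumes "\<And>n. 0 < n \<Longrightarrow> p n \<le> exp (- M * real n)"
  shows "limsup (\<lambda>n. ereal (1 / real n) * eln (p n)) \<le> ereal (- M)"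
proof (rule Limsup_bounded)
  show "\<forall>\<^sub>F n in sequentially. ereal (1 / real n) * eln (p n) \<le> ereal (- M)"
  proof (rule eventually_mono[OF eventually_gt_at_top[of 0]])
    fix n :: nat assume "0 < n"
    show "ereal (1 / real n) * eln (p n) \<le> ereal (- M)"
    proof (cases "p n \<le> 0")
      case False
      then have "ln (p n) \<le> ln (exp (- M * real n))"
        using assms[OF \<open>0 < n\<close>] by (subst ln_le_cancel_iff) auto
      then have "ln (p n) \<le> - M * real n"
        by simp
      then show ?thesis
        using False \<open>0 < n\<close> by (simp add: eln_def divide_le_eq)
    qed (use \<open>0 < n\<close> in \<open>simp add: eln_def\<close>)
  qed
qed

theorem theorem3p8:
  fixes \<epsilon> :: real
  assumes "\<epsilon> > 0"
  shows "limsup (\<lambda>k::nat. limsup (\<lambda>n::nat.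
           ereal (1 / real n) *
           eln (measure_pmf.prob (sample_space n)
                 {X. (\<Sum>q\<in>Sprimes k n. real (Ycount n q X) ^ 2) > real n ^ 2 * \<epsilon>})))
         = - \<infinity>"
proof (rule ereal_bot)
  fix B :: real
  obtain K where K: "\<And>k n. K \<le> k \<Longrightarrow> 0 < n \<Longrightarrow>
      measure_pmf.prob (sample_space n)
        {X. (\<Sum>q\<in>Sprimes k n. real (Ycount n q X) ^ 2) > real n ^ 2 * \<epsilon>}
      \<le> exp (- max 0 (- B) * real n)"
    using prob_sum_squares_Ycount_gt_le_exp[OF assms, of "max 0 (- B)"] by auto
  show "limsup (\<lambda>k::nat. limsup (\<lambda>n::nat.
           ereal (1 / real n) *
           eln (measure_pmf.prob (sample_space n)
                 {X. (\<Sum>q\<in>Sprimes k n. real (Ycount n q X) ^ 2) > real n ^ 2 * \<epsilon>})))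
         \<le> ereal B"
    by (rule order_trans[where y = "ereal (- max 0 (- B))"],
        intro Limsup_bounded eventually_sequentiallyI[of K] limsup_scaled_eln_le K) simp_all
qed

end
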